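(* Let $c_{n,k}$ be the number of matchings of size $n$ with exactly $k$ occurrences of the endhered pattern $321$, and $a_{n,0}$ the number of matchings of size $n$ with no occurrence of the endhered pattern $21$. For any $n>0$, $$c_{n,0}=\sum_{s=0}^{\lfloor n/2\rfloor}\binom{n-s}{s}a_{n-s,0},$$ and for any $k>0$, $$c_{n,k}=\sum_{s=1}^{\lfloor (n-k)/2\rfloor}\binom{k+s-1}{k}\binom{n-k-s}{s}a_{n-k-s,0}.$$
   Context: A matching of size $n$ is a set of $n$ arcs $(a,b)$ with $1\le a<b\le 2n$ such that each point of $\{1,\dots,2n\}$ belongs to exactly one arc (the empty matching has size $0$). An occurrence of the endhered pattern $21$ in a matching is a pair of arcs of the form $(i+1,j+2),(i+2,j+1)$; an occurrence of the endhered pattern $321$ is a triple of arcs of the form $(i+1,j+3),(i+2,j+2),(i+3,j+1)$ (three mutually nested arcs with consecutive starting points and consecutive ending points). The number of occurrences is the number of such pairs (resp. triples). *)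

theory Defs
  imports Main
begin

definition is_matching :: "nat \<Rightarrow> (nat \<times> nat) set \<Rightarrow> bool" where
  "is_matching n M \<longleftrightarrow>
     (\<forall>(a,b)\<in>M. 1 \<le> a \<and> a < b \<and> b \<le> 2*n) \<and>
     (\<forall>p\<in>{1..2*n}. \<exists>!e. e \<in> M \<and> (p = fst e \<or> p = snd e))"

definition matchings :: "nat \<Rightarrow> (nat \<times> nat) set set" where
  "matchings n = {M. is_matching n M}"

definition occ21 :: "(nat \<times> nat) set \<Rightarrow> nat" where
  "occ21 M = card {(i,j). (i+1, j+2) \<in> M \<and> (i+2, j+1) \<in> M}"

definition occ321 :: "(nat \<times> nat) set \<Rightarrow> nat" where
  "occ321 M = card {(i,j). (i+1, j+3) \<in> M \<and> (i+2, j+2) \<in> M \<and> (i+3, j+1) \<in> M}"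

definition c_num :: "nat \<Rightarrow> nat \<Rightarrow> nat" where
  "c_num n k = card {M \<in> matchings n. occ321 M = k}"

definition a_num :: "nat \<Rightarrow> nat \<Rightarrow> nat" where
  "a_num n k = card {M \<in> matchings n. occ21 M = k}"

end

theory Submission
  imports Defs "HOL-Library.Product_Lexorder"
begin

text \<open>Every matching splits into maximal ladders \<open>(x, y), (x + 1, y - 1), \<dots>\<close> of nested
  arcs, its runs; a run of \<open>l\<close> arcs contains \<open>l - 1\<close> occurrences of 21 and \<open>l - 2\<close> occurrences
  of 321. Collapsing each run to one arc yields a 21-avoiding matching, and conversely the matchings
  whose run lengths, listed by first arcs, form a given composition \<open>t\<close> of \<open>n\<close> arise from the
  21-avoiding matchings of size \<open>length t\<close> by repeatedly doubling arcs; so there are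
  \<open>a_num (length t) 0\<close> of them. Hence \<open>c_num n k\<close> sums \<open>a_num (length t) 0\<close> over the compositions
  \<open>t\<close> of \<open>n\<close> with \<open>\<Sum>(t\<^sub>i - 2) = k\<close> (truncated subtraction). Such a composition with \<open>s\<close>
  parts \<open>\<ge> 2\<close> has \<open>n - k - s\<close> parts: choosing the long parts gives \<open>(n - k - s) choose s\<close>, and
  distributing the excess \<open>k\<close> over them gives \<open>(k + s - 1) choose k\<close>.\<close>

lemma matching_arcD: "is_matching n M \<Longrightarrow> (x, y) \<in> M \<Longrightarrow> 1 \<le> x \<and> x < y \<and> y \<le> 2 * n"
  unfolding is_matching_def by blast

lemma matching_coversD: "is_matching n M \<Longrightarrow> p \<in> {1..2 * n} \<Longrightarrow> \<exists>e\<in>M. p = fst e \<or> p = snd e"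
  unfolding is_matching_def by blast

lemma matching_arcs_eqI:
  assumes M: "is_matching n M" and "e1 \<in> M" "e2 \<in> M"
    and "p = fst e1 \<or> p = snd e1" "p = fst e2 \<or> p = snd e2"
  shows "e1 = e2"
proof -
  have "p \<in> {1..2 * n}"
    using assms matching_arcD[OF M, of "fst e1" "snd e1"] by auto
  then show ?thesis
    using assms unfolding is_matching_def by blast
qed

lemma is_matchingI:
  assumes "\<And>x y. (x, y) \<in> M \<Longrightarrow> 1 \<le> x \<and> x < y \<and> y \<le> 2 * n"
    and "\<And>p. p \<in> {1..2 * n} \<Longrightarrow> \<exists>e\<in>M. p = fst e \<or> p = snd e"
    and "\<And>e1 e2 p. e1 \<in> M \<Longrightarrow> e2 \<in> M \<Longrightarrow> p = fst e1 \<or> p = snd e1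
           \<Longrightarrow> p = fst e2 \<or> p = snd e2 \<Longrightarrow> e1 = e2"
  shows "is_matching n M"
  unfolding is_matching_def using assms by blast

lemma matching_same_fst: "is_matching n M \<Longrightarrow> (x, y) \<in> M \<Longrightarrow> (x, y') \<in> M \<Longrightarrow> y = y'"
  using matching_arcs_eqI[of n M "(x, y)" "(x, y')" x] by auto

lemma matching_same_snd: "is_matching n M \<Longrightarrow> (x, y) \<in> M \<Longrightarrow> (x', y) \<in> M \<Longrightarrow> x = x'"
  using matching_arcs_eqI[of n M "(x, y)" "(x', y)" y] by auto

lemma matching_end_not_start: "is_matching n M \<Longrightarrow> (x, y) \<in> M \<Longrightarrow> (y, z) \<notin> M"
  using matching_arcs_eqI[of n M "(x, y)" "(y, z)" y] matching_arcD[of n M] by fastforce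

lemma matching_0: "is_matching 0 M \<Longrightarrow> M = {}"
  using matching_arcD[of 0 M] by fastforce

lemma finite_matching: "is_matching n M \<Longrightarrow> finite M"
  by (rule finite_subset[of _ "{1..2 * n} \<times> {1..2 * n}"]) (auto dest: matching_arcD)

lemma finite_matchings: "finite (matchings n)"
  by (rule finite_subset[of _ "Pow ({1..2 * n} \<times> {1..2 * n})"])
    (auto simp: matchings_def dest: matching_arcD)

lemma card_matching:
  assumes M: "is_matching n M"
  shows "card M = n"
proof -
  have "inj_on fst M" "inj_on snd M"
    using matching_same_fst[OF M] matching_same_snd[OF M] by (auto intro!: inj_onI)
  moreover have "fst ` M \<inter> snd ` M = {}"
    using matching_end_not_start[OF M] by fastforce
  moreover have "fst ` M \<union> snd ` M = {1..2 * n}"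
    using matching_arcD[OF M] matching_coversD[OF M] by fastforce
  ultimately have "2 * n = card M + card M"
    using card_Un_disjoint[of "fst ` M" "snd ` M"] finite_matching[OF M] by (simp add: card_image)
  then show ?thesis by simp
qed

text \<open>Doubling the arc \<open>(a, b)\<close> replaces it by the two nested arcs \<open>(a, b + 2)\<close> and
  \<open>(a + 1, b + 1)\<close>; the other points are renumbered by \<open>shift2 a b\<close>, which skips the new
  points \<open>a + 1\<close> and \<open>b + 1\<close>.\<close>

definition shift2 :: "nat \<Rightarrow> nat \<Rightarrow> nat \<Rightarrow> nat" where
  "shift2 a b x = (if x \<le> a then x else if x < b then Suc x else x + 2)"

abbreviation shift2_arc :: "nat \<Rightarrow> nat \<Rightarrow> nat \<times> nat \<Rightarrow> nat \<times> nat" where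
  "shift2_arc a b \<equiv> map_prod (shift2 a b) (shift2 a b)"

definition double_arc :: "(nat \<times> nat) set \<Rightarrow> nat \<Rightarrow> nat \<Rightarrow> (nat \<times> nat) set" where
  "double_arc M a b = shift2_arc a b ` M \<union> {(Suc a, Suc b)}"

lemma shift2_eq_iff [simp]: "shift2 a b x = shift2 a b y \<longleftrightarrow> x = y"
  unfolding shift2_def by auto

lemma shift2_less_iff [simp]: "shift2 a b x < shift2 a b y \<longleftrightarrow> x < y"
  unfolding shift2_def by auto

lemma shift2_ne_Suc_fst: "shift2 a b x \<noteq> Suc a" "Suc a \<noteq> shift2 a b x"
  unfolding shift2_def by auto

lemma shift2_ne_Suc_snd: "a < b \<Longrightarrow> shift2 a b x \<noteq> Suc b"
  unfolding shift2_def by auto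

lemma shift2_fst [simp]: "shift2 a b a = a"
  unfolding shift2_def by simp

lemma shift2_snd [simp]: "a < b \<Longrightarrow> shift2 a b b = b + 2"
  unfolding shift2_def by simp

lemma shift2_eq_Suc_shift2: "shift2 a b u = Suc (shift2 a b x) \<Longrightarrow> u = Suc x"
  unfolding shift2_def by (auto split: if_splits)

lemma shift2_eq_shift2_minus_1: "shift2 a b v = shift2 a b y - 1 \<Longrightarrow> 1 \<le> y \<Longrightarrow> v = y - 1"
  unfolding shift2_def by (auto split: if_splits)

lemma shift2_surj: "a < b \<Longrightarrow> p \<noteq> Suc a \<Longrightarrow> p \<noteq> Suc b \<Longrightarrow> \<exists>z. shift2 a b z = p"
  unfolding shift2_def
  by (rule exI[of _ "if p \<le> a then p else if p \<le> b then p - 1 else p - 2"]) auto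

lemma inj_shift2_arc: "inj (shift2_arc a b)"
  by (auto intro!: injI)

lemma shift2_in_double_arc_iff [simp]:
  "(shift2 a b x, shift2 a b y) \<in> double_arc M a b \<longleftrightarrow> (x, y) \<in> M"
  unfolding double_arc_def using shift2_ne_Suc_fst[of a b] inj_image_mem_iff[OF inj_shift2_arc]
  by fastforce

lemma new_arc_in_double_arc: "(Suc a, Suc b) \<in> double_arc M a b"
  unfolding double_arc_def by blast

lemma in_double_arcE:
  assumes "e \<in> double_arc M a b"
  obtains "e = (Suc a, Suc b)" | u v where "(u, v) \<in> M" "e = (shift2 a b u, shift2 a b v)"
  using assms unfolding double_arc_def by auto

lemma double_arc_inj:
  assumes "double_arc M1 a b = double_arc M2 a b"
  shows "M1 = M2"
proof (rule set_eqI)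
  show "e \<in> M1 \<longleftrightarrow> e \<in> M2" for e
    using shift2_in_double_arc_iff[of a b "fst e" "snd e" M1] shift2_in_double_arc_iff[of a b "fst e" "snd e" M2]
    by (simp add: assms)
qed

lemma double_arc_arcs_eqI:
  assumes M: "is_matching n M" and "a < b"
    and e: "e1 \<in> double_arc M a b" "e2 \<in> double_arc M a b"
      "p = fst e1 \<or> p = snd e1" "p = fst e2 \<or> p = snd e2"
  shows "e1 = e2"
proof (cases "p = Suc a \<or> p = Suc b")
  case True
  have "e = (Suc a, Suc b)"
    if "e \<in> double_arc M a b" "fst e = Suc a \<or> snd e = Suc a \<or> fst e = Suc b \<or> snd e = Suc b" for e
    using that shift2_ne_Suc_fst[of a b] shift2_ne_Suc_snd[OF \<open>a < b\<close>] unfolding double_arc_def by auto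
  then show ?thesis
    using True e by metis
next
  case False
  from e(1) obtain u1 v1 where 1: "(u1, v1) \<in> M" "e1 = (shift2 a b u1, shift2 a b v1)"
    using e(3) False by (auto elim: in_double_arcE)
  from e(2) obtain u2 v2 where 2: "(u2, v2) \<in> M" "e2 = (shift2 a b u2, shift2 a b v2)"
    using e(4) False by (auto elim: in_double_arcE)
  obtain q where "q = u1 \<or> q = v1" "q = u2 \<or> q = v2"
    using e(3,4) 1(2) 2(2) by (metis fst_conv snd_conv shift2_eq_iff)
  then show ?thesis
    using matching_arcs_eqI[OF M 1(1) 2(1), of q] 1(2) 2(2) by auto
qed

lemma matching_double_arc:
  assumes M: "is_matching n M" and ab: "(a, b) \<in> M"
  shows "is_matching (Suc n) (double_arc M a b)"
proof (rule is_matchingI)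
  have ab': "1 \<le> a" "a < b" "b \<le> 2 * n"
    using matching_arcD[OF M ab] by auto
  show "1 \<le> x \<and> x < y \<and> y \<le> 2 * Suc n" if "(x, y) \<in> double_arc M a b" for x y
    using that by (rule in_double_arcE) (use ab' in \<open>auto simp: shift2_def dest!: matching_arcD[OF M]\<close>)
  show "\<exists>e\<in>double_arc M a b. p = fst e \<or> p = snd e" if p: "p \<in> {1..2 * Suc n}" for p
  proof (cases "p = Suc a \<or> p = Suc b")
    case True
    then show ?thesis using new_arc_in_double_arc[of a b M] by force
  next
    case False
    then obtain z where z: "shift2 a b z = p"
      using shift2_surj[OF ab'(2)] by blast
    then have "z \<in> {1..2 * n}"
      using p ab' unfolding shift2_def by (auto split: if_splits)
    then obtain e where "e \<in> M" "z = fst e \<or> z = snd e"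
      using matching_coversD[OF M] by blast
    then show ?thesis
      using z shift2_in_double_arc_iff[of a b "fst e" "snd e" M]
      by (intro bexI[of _ "(shift2 a b (fst e), shift2 a b (snd e))"]) auto
  qed
  show "e1 = e2" if "e1 \<in> double_arc M a b" "e2 \<in> double_arc M a b"
    "p = fst e1 \<or> p = snd e1" "p = fst e2 \<or> p = snd e2" for e1 e2 p
    using double_arc_arcs_eqI[OF M ab'(2) that] .
qed

text \<open>\<open>run_len M x y\<close> is the length of the ladder \<open>(x, y), (x + 1, y - 1), \<dots>\<close> of nested arcs
  of \<open>M\<close> with consecutive starting and ending points; occurrences of the endhered patterns 21
  and 321 are ladders of two and three arcs.\<close>

definition run_len :: "(nat \<times> nat) set \<Rightarrow> nat \<Rightarrow> nat \<Rightarrow> nat" where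
  "run_len M x y = (LEAST q. (x + q, y - q) \<notin> M)"

lemma run_mem: "q < run_len M x y \<Longrightarrow> (x + q, y - q) \<in> M"
  unfolding run_len_def using not_less_Least by blast

lemma run_end_not_mem: "is_matching n M \<Longrightarrow> (x + run_len M x y, y - run_len M x y) \<notin> M"
  unfolding run_len_def by (rule LeastI[of _ y]) (use matching_arcD[of n M "x + y" 0] in auto)

lemma le_run_len_iff: "is_matching n M \<Longrightarrow> k \<le> run_len M x y \<longleftrightarrow> (\<forall>q<k. (x + q, y - q) \<in> M)"
  using run_mem run_end_not_mem by (metis leI order_less_le_trans)

lemma run_len_eqI:
  "(\<And>q. q < L \<Longrightarrow> (x + q, y - q) \<in> M) \<Longrightarrow> (x + L, y - L) \<notin> M \<Longrightarrow> run_len M x y = L"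
  unfolding run_len_def by (rule Least_equality) (auto simp: not_less[symmetric])

lemma run_len_eq_0: "(x, y) \<notin> M \<Longrightarrow> run_len M x y = 0"
  by (rule run_len_eqI) auto

lemma run_len_Suc:
  assumes M: "is_matching n M" and "(x, y) \<in> M"
  shows "run_len M x y = Suc (run_len M (Suc x) (y - 1))"
proof (rule run_len_eqI)
  show "(x + q, y - q) \<in> M" if "q < Suc (run_len M (Suc x) (y - 1))" for q
    using that assms(2) run_mem[of "q - 1" M "Suc x" "y - 1"] by (cases q) auto
  show "(x + Suc (run_len M (Suc x) (y - 1)), y - Suc (run_len M (Suc x) (y - 1))) \<notin> M"
    using run_end_not_mem[OF M, of "Suc x" "y - 1"] by simp
qed

lemma run_len_pos: "is_matching n M \<Longrightarrow> (x, y) \<in> M \<Longrightarrow> 0 < run_len M x y"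
  by (subst run_len_Suc) auto

lemma shift2_succ:
  assumes M: "is_matching n M" and ab: "(a, b) \<in> M"
    and xy: "(x, y) \<in> M" "(x, y) \<noteq> (a, b)" and succ: "(Suc x, y - 1) \<in> M"
  shows "shift2 a b (Suc x) = Suc (shift2 a b x) \<and> shift2 a b (y - 1) = shift2 a b y - 1"
proof -
  have "x \<noteq> a" "y \<noteq> b"
    using matching_same_fst[OF M xy(1)] matching_same_snd[OF M xy(1)] ab xy(2) by auto
  moreover have "Suc x \<noteq> b" "y - 1 \<noteq> a"
    using matching_end_not_start[OF M ab] matching_end_not_start[OF M succ] succ ab by auto
  moreover have "a < b" "Suc x < y - 1"
    using matching_arcD[OF M ab] matching_arcD[OF M succ] by auto
  ultimately show ?thesis
    unfolding shift2_def by auto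
qed

lemma succ_in_double_arc_iff:
  assumes M: "is_matching n M" and ab: "(a, b) \<in> M" and xy: "(x, y) \<in> M" "(x, y) \<noteq> (a, b)"
  shows "(Suc (shift2 a b x), shift2 a b y - 1) \<in> double_arc M a b \<longleftrightarrow> (Suc x, y - 1) \<in> M"
proof
  assume "(Suc x, y - 1) \<in> M"
  then show "(Suc (shift2 a b x), shift2 a b y - 1) \<in> double_arc M a b"
    using shift2_succ[OF assms] shift2_in_double_arc_iff[of a b "Suc x" "y - 1" M] by simp
next
  assume "(Suc (shift2 a b x), shift2 a b y - 1) \<in> double_arc M a b"
  then show "(Suc x, y - 1) \<in> M"
  proof (rule in_double_arcE)
    assume "(Suc (shift2 a b x), shift2 a b y - 1) = (Suc a, Suc b)"
    then have "x = a"
      using shift2_eq_iff[of a b x a] by simp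
    then show ?thesis
      using matching_same_fst[OF M xy(1)] ab xy(2) by auto
  next
    fix u v
    assume "(u, v) \<in> M" "(Suc (shift2 a b x), shift2 a b y - 1) = (shift2 a b u, shift2 a b v)"
    moreover have "1 \<le> y"
      using matching_arcD[OF M xy(1)] by simp
    ultimately show ?thesis
      using shift2_eq_Suc_shift2[of a b u x] shift2_eq_shift2_minus_1[of a b v y] by auto
  qed
qed

lemma pred_in_double_arc_iff:
  assumes M: "is_matching n M" and ab: "(a, b) \<in> M" and xy: "(x, y) \<in> M"
  shows "(shift2 a b x - 1, Suc (shift2 a b y)) \<in> double_arc M a b \<longleftrightarrow> (x - 1, Suc y) \<in> M"
proof -
  have xy': "1 \<le> x" "x < y" and "a < b"
    using matching_arcD[OF M xy] matching_arcD[OF M ab] by auto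
  show ?thesis
  proof
    assume pred: "(x - 1, Suc y) \<in> M"
    show "(shift2 a b x - 1, Suc (shift2 a b y)) \<in> double_arc M a b"
    proof (cases "(x - 1, Suc y) = (a, b)")
      case True
      then have "shift2 a b x - 1 = Suc a" "Suc (shift2 a b y) = Suc b"
        using xy' unfolding shift2_def by auto
      then show ?thesis
        using new_arc_in_double_arc by simp
    next
      case False
      have "(Suc (x - 1), Suc y - 1) \<in> M"
        using xy xy' by simp
      then have "shift2 a b x = Suc (shift2 a b (x - 1))" "shift2 a b y = shift2 a b (Suc y) - 1"
        using shift2_succ[OF M ab pred False] xy' by simp_all
      moreover have "0 < shift2 a b (Suc y)"
        using shift2_less_iff[of a b y "Suc y"] by linarith
      ultimately show ?thesis
        using shift2_in_double_arc_iff[of a b "x - 1" "Suc y" M] pred by simp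
    qed
  next
    assume "(shift2 a b x - 1, Suc (shift2 a b y)) \<in> double_arc M a b"
    then show "(x - 1, Suc y) \<in> M"
    proof (rule in_double_arcE)
      assume "(shift2 a b x - 1, Suc (shift2 a b y)) = (Suc a, Suc b)"
      then have "(x - 1, Suc y) = (a, b)"
        using xy' \<open>a < b\<close> unfolding shift2_def by (auto split: if_splits)
      then show ?thesis using ab by simp
    next
      fix u v
      assume "(u, v) \<in> M" "(shift2 a b x - 1, Suc (shift2 a b y)) = (shift2 a b u, shift2 a b v)"
      then show ?thesis
        using shift2_eq_Suc_shift2[of a b v y] shift2_eq_shift2_minus_1[of a b u x] xy' by auto
    qed
  qed
qed

text \<open>For an arc starting at 1 the truncated predecessor \<open>(0, y + 1)\<close> is never an arc, so such an
  arc heads a run.\<close>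

definition run_heads :: "(nat \<times> nat) set \<Rightarrow> (nat \<times> nat) set" where
  "run_heads M = {e \<in> M. (fst e - 1, Suc (snd e)) \<notin> M}"

lemma run_heads_subset: "run_heads M \<subseteq> M"
  unfolding run_heads_def by auto

lemma run_heads_double_arc:
  assumes M: "is_matching n M" and ab: "(a, b) \<in> M"
  shows "run_heads (double_arc M a b) = shift2_arc a b ` run_heads M"
proof (rule set_eqI)
  fix e
  show "e \<in> run_heads (double_arc M a b) \<longleftrightarrow> e \<in> shift2_arc a b ` run_heads M"
  proof (cases "e \<in> double_arc M a b")
    case False
    then show ?thesis
      unfolding run_heads_def by auto
  next
    case True
    then show ?thesis
    proof (rule in_double_arcE)
      assume e: "e = (Suc a, Suc b)"
      have "(a, b + 2) \<in> double_arc M a b"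
        using shift2_in_double_arc_iff[of a b a b M] ab matching_arcD[OF M ab] by simp
      then show ?thesis
        unfolding run_heads_def e using shift2_ne_Suc_fst by auto
    next
      fix u v
      assume "(u, v) \<in> M" and e: "e = (shift2 a b u, shift2 a b v)"
      then show ?thesis
        using pred_in_double_arc_iff[OF M ab] inj_image_mem_iff[OF inj_shift2_arc, of a b "(u, v)"]
          shift2_in_double_arc_iff[of a b u v M]
        unfolding run_heads_def by auto
    qed
  qed
qed

lemma run_len_double_arc_other:
  assumes M: "is_matching n M" and ab: "(a, b) \<in> run_heads M" and "(x, y) \<noteq> (a, b)"
  shows "run_len (double_arc M a b) (shift2 a b x) (shift2 a b y) = run_len M x y"
  using assms(3)
proof (induction "run_len M x y" arbitrary: x y)
  case 0
  then have "(x, y) \<notin> M"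
    using run_len_pos[OF M] by fastforce
  then show ?case
    using shift2_in_double_arc_iff[of a b x y M] run_len_eq_0 "0.hyps" by simp
next
  case (Suc L)
  have abM: "(a, b) \<in> M"
    using ab run_heads_subset by blast
  have M': "is_matching (Suc n) (double_arc M a b)"
    by (rule matching_double_arc[OF M abM])
  have xy: "(x, y) \<in> M"
    using run_mem[of 0 M x y] Suc.hyps(2) by simp
  have L: "L = run_len M (Suc x) (y - 1)"
    using run_len_Suc[OF M xy] Suc.hyps(2) by simp
  have "run_len (double_arc M a b) (shift2 a b x) (shift2 a b y)
      = Suc (run_len (double_arc M a b) (Suc (shift2 a b x)) (shift2 a b y - 1))"
    using run_len_Suc[OF M'] shift2_in_double_arc_iff[of a b x y M] xy by simp
  also have "run_len (double_arc M a b) (Suc (shift2 a b x)) (shift2 a b y - 1) = L"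
  proof (cases "(Suc x, y - 1) \<in> M")
    case True
    have "1 \<le> x" "x < y"
      using matching_arcD[OF M xy] by auto
    then have "(Suc x, y - 1) \<noteq> (a, b)"
      using ab xy unfolding run_heads_def by auto
    then show ?thesis
      using Suc.hyps(1)[OF L] shift2_succ[OF M abM xy Suc.prems True] L by simp
  next
    case False
    then show ?thesis
      using succ_in_double_arc_iff[OF M abM xy Suc.prems] run_len_eq_0 L by simp
  qed
  finally show ?case
    using Suc.hyps(2) by simp
qed

lemma run_len_double_arc_new:
  assumes M: "is_matching n M" and ab: "(a, b) \<in> run_heads M"
  shows "run_len (double_arc M a b) (Suc a) (Suc b) = run_len M a b"
    and "run_len (double_arc M a b) a (b + 2) = Suc (run_len M a b)"
proof -
  have abM: "(a, b) \<in> M"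
    using ab run_heads_subset by blast
  have ab': "a < b"
    using matching_arcD[OF M abM] by simp
  have M': "is_matching (Suc n) (double_arc M a b)"
    by (rule matching_double_arc[OF M abM])
  have "run_len (double_arc M a b) (Suc a) (Suc b) = Suc (run_len (double_arc M a b) (Suc (Suc a)) b)"
    using run_len_Suc[OF M' new_arc_in_double_arc] by simp
  also have "run_len (double_arc M a b) (Suc (Suc a)) b = run_len M (Suc a) (b - 1)"
  proof (cases "Suc a < b")
    case True
    then have "shift2 a b (Suc a) = Suc (Suc a)" "shift2 a b (b - 1) = b"
      unfolding shift2_def by auto
    then show ?thesis
      using run_len_double_arc_other[OF M ab, of "Suc a" "b - 1"] by simp
  next
    case False
    then have "(Suc a, b - 1) \<notin> M" "(Suc (Suc a), b) \<notin> double_arc M a b"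
      using matching_arcD[OF M] matching_arcD[OF M'] by fastforce+
    then show ?thesis
      using run_len_eq_0 by metis
  qed
  finally show new: "run_len (double_arc M a b) (Suc a) (Suc b) = run_len M a b"
    using run_len_Suc[OF M abM] by simp
  have "(a, b + 2) \<in> double_arc M a b"
    using shift2_in_double_arc_iff[of a b a b M] abM ab' by simp
  then show "run_len (double_arc M a b) a (b + 2) = Suc (run_len M a b)"
    using run_len_Suc[OF M'] new by simp
qed

lemma sorted_list_of_set_image_strict_mono:
  fixes f :: "'a::linorder \<Rightarrow> 'b::linorder"
  assumes "finite S" and "strict_mono_on S f"
  shows "sorted_list_of_set (f ` S) = map f (sorted_list_of_set S)"
proof (rule strict_sorted_equal)
  have "sorted_wrt (<) (sorted_list_of_set S)"
    by simp
  then show "sorted_wrt (<) (map f (sorted_list_of_set S))"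
    unfolding sorted_wrt_map
    by (rule sorted_wrt_mono_rel[rotated]) (use assms in \<open>auto dest: strict_mono_onD\<close>)
qed (use assms in simp_all)

definition run_head_list :: "(nat \<times> nat) set \<Rightarrow> (nat \<times> nat) list" where
  "run_head_list M = sorted_list_of_set (run_heads M)"

definition run_lengths :: "(nat \<times> nat) set \<Rightarrow> nat list" where
  "run_lengths M = map (\<lambda>(x, y). run_len M x y) (run_head_list M)"

lemma length_run_lengths [simp]: "length (run_lengths M) = length (run_head_list M)"
  unfolding run_lengths_def by simp

lemma run_lengths_nth:
  "i < length (run_head_list M) \<Longrightarrow> run_head_list M ! i = (a, b) \<Longrightarrow> run_lengths M ! i = run_len M a b"
  unfolding run_lengths_def by simp

lemma set_run_head_list: "is_matching n M \<Longrightarrow> set (run_head_list M) = run_heads M"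
  unfolding run_head_list_def
  by (meson finite_matching run_heads_subset finite_subset set_sorted_list_of_set)

lemma run_head_list_nth:
  assumes M: "is_matching n M" and "i < length (run_head_list M)" "run_head_list M ! i = (a, b)"
  shows "(a, b) \<in> run_heads M" "(a, b) \<in> M" "a < b"
  using assms set_run_head_list[OF M] nth_mem run_heads_subset matching_arcD[OF M]
  by (metis subsetD)+

lemma run_lengths_pos: "is_matching n M \<Longrightarrow> x \<in> set (run_lengths M) \<Longrightarrow> 0 < x"
  unfolding run_lengths_def using set_run_head_list run_heads_subset run_len_pos
  by fastforce

lemma run_head_list_double_arc:
  assumes M: "is_matching n M" and ab: "(a, b) \<in> M"
  shows "run_head_list (double_arc M a b) = map (shift2_arc a b) (run_head_list M)"
proof -
  have "finite (run_heads M)"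
    using finite_matching[OF M] run_heads_subset finite_subset by blast
  moreover have "strict_mono_on (run_heads M) (shift2_arc a b)"
    by (auto intro!: strict_mono_onI simp: less_prod_def')
  ultimately show ?thesis
    unfolding run_head_list_def run_heads_double_arc[OF M ab]
    by (rule sorted_list_of_set_image_strict_mono)
qed

definition double_run :: "(nat \<times> nat) set \<Rightarrow> nat \<Rightarrow> (nat \<times> nat) set" where
  "double_run M i = (case run_head_list M ! i of (a, b) \<Rightarrow> double_arc M a b)"

lemma matching_double_run:
  assumes M: "is_matching n M" and i: "i < length (run_head_list M)"
  shows "is_matching (Suc n) (double_run M i)"
  using matching_double_arc[OF M run_head_list_nth(2)[OF M i]]
  unfolding double_run_def by (simp split: prod.split)

lemma run_head_list_double_run:
  assumes M: "is_matching n M" and i: "i < length (run_head_list M)" and ab: "run_head_list M ! i = (a, b)"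
  shows "run_head_list (double_run M i) = map (shift2_arc a b) (run_head_list M)"
    and "run_head_list (double_run M i) ! i = (a, b + 2)"
  using run_head_list_double_arc[OF M run_head_list_nth(2)[OF M i ab]] run_head_list_nth(3)[OF M i ab] i ab
  unfolding double_run_def by simp_all

lemma run_lengths_double_run:
  assumes M: "is_matching n M" and i: "i < length (run_head_list M)"
  shows "run_lengths (double_run M i) = (run_lengths M)[i := Suc (run_lengths M ! i)]"
proof (rule nth_equalityI)
  obtain a b where ab: "run_head_list M ! i = (a, b)"
    by fastforce
  note heads = run_head_list_double_run[OF M i ab]
  show "length (run_lengths (double_run M i)) = length ((run_lengths M)[i := Suc (run_lengths M ! i)])"
    using heads by simp
  fix j
  assume "j < length (run_lengths (double_run M i))"
  then have j: "j < length (run_head_list M)"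
    using heads by simp
  obtain x y where xy: "run_head_list M ! j = (x, y)"
    by fastforce
  have lhs: "run_lengths (double_run M i) ! j = run_len (double_arc M a b) (shift2 a b x) (shift2 a b y)"
    using heads j xy ab unfolding run_lengths_def double_run_def by simp
  show "run_lengths (double_run M i) ! j = (run_lengths M)[i := Suc (run_lengths M ! i)] ! j"
  proof (cases "j = i")
    case True
    then show ?thesis
      using lhs xy ab j run_lengths_nth[OF j xy] run_head_list_nth[OF M i ab]
        run_len_double_arc_new[OF M] by simp
  next
    case False
    then have "(x, y) \<noteq> (a, b)"
      using xy ab i j distinct_sorted_list_of_set nth_eq_iff_index_eq
      unfolding run_head_list_def by metis
    then show ?thesis
      using lhs False j run_lengths_nth[OF j xy] run_len_double_arc_other[OF M run_head_list_nth(1)[OF M i ab]]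
      by simp
  qed
qed

lemma inj_on_double_run: "inj_on (\<lambda>M. double_run M i) {M. is_matching n M \<and> i < length (run_head_list M)}"
proof (rule inj_onI)
  fix M1 M2
  assume M1: "M1 \<in> {M. is_matching n M \<and> i < length (run_head_list M)}"
    and M2: "M2 \<in> {M. is_matching n M \<and> i < length (run_head_list M)}"
    and eq: "double_run M1 i = double_run M2 i"
  obtain a1 b1 where ab1: "run_head_list M1 ! i = (a1, b1)"
    by fastforce
  obtain a2 b2 where ab2: "run_head_list M2 ! i = (a2, b2)"
    by fastforce
  have "(a1, b1 + 2) = (a2, b2 + 2)"
    using run_head_list_double_run(2)[of n M1 i a1 b1] run_head_list_double_run(2)[of n M2 i a2 b2]
      M1 M2 ab1 ab2 eq by simp
  then show "M1 = M2"
    using eq ab1 ab2 double_arc_inj[of M1 a1 b1 M2] unfolding double_run_def by simp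
qed

lemma double_arc_vimage:
  assumes M: "is_matching (Suc n) M" and inner: "(Suc a, Suc c) \<in> M"
  shows "double_arc (shift2_arc a c -` M) a c = M"
proof -
  have ac: "a < c"
    using matching_arcD[OF M inner] by simp
  have "e \<in> shift2_arc a c ` (shift2_arc a c -` M)" if e: "e \<in> M" "e \<noteq> (Suc a, Suc c)" for e
  proof -
    have avoid: "p \<noteq> Suc a" "p \<noteq> Suc c" if "p = fst e \<or> p = snd e" for p
      using matching_arcs_eqI[OF M e(1) inner, of p] that e(2) by auto
    obtain u v where "shift2 a c u = fst e" "shift2 a c v = snd e"
      using shift2_surj[OF ac] avoid by metis
    then show ?thesis
      using e(1) by (intro image_eqI[of _ _ "(u, v)"]) auto
  qed
  then show ?thesis
    unfolding double_arc_def using inner by auto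
qed

lemma matching_vimage_shift2:
  assumes M: "is_matching (Suc n) M" and inner: "(Suc a, Suc c) \<in> M"
  shows "is_matching n (shift2_arc a c -` M)"
proof -
  have ac: "a < c" and c: "Suc c \<le> 2 * Suc n"
    using matching_arcD[OF M inner] by simp_all
  show ?thesis
  proof (rule is_matchingI)
    fix u v
    assume "(u, v) \<in> shift2_arc a c -` M"
    then have "(shift2 a c u, shift2 a c v) \<in> M"
      by simp
    then have "1 \<le> shift2 a c u \<and> shift2 a c u < shift2 a c v \<and> shift2 a c v \<le> 2 * Suc n"
      by (rule matching_arcD[OF M])
    then show "1 \<le> u \<and> u < v \<and> v \<le> 2 * n"
      using ac c unfolding shift2_def by (auto split: if_splits)
  next
    fix p
    assume "p \<in> {1..2 * n}"
    then have "shift2 a c p \<in> {1..2 * Suc n}"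
      unfolding shift2_def by auto
    then obtain e where e: "e \<in> M" "shift2 a c p = fst e \<or> shift2 a c p = snd e"
      using matching_coversD[OF M] by blast
    from e(1) have "e \<in> double_arc (shift2_arc a c -` M) a c"
      using double_arc_vimage[OF M inner] by simp
    then show "\<exists>e\<in>shift2_arc a c -` M. p = fst e \<or> p = snd e"
    proof (rule in_double_arcE)
      assume "e = (Suc a, Suc c)"
      then show ?thesis
        using e(2) shift2_ne_Suc_fst[of a c p] shift2_ne_Suc_snd[OF ac, of p] by auto
    next
      fix u v
      assume "(u, v) \<in> shift2_arc a c -` M" "e = (shift2 a c u, shift2 a c v)"
      moreover from this(2) have "p = u \<or> p = v"
        using e(2) by auto
      ultimately show ?thesis
        by (intro bexI[of _ "(u, v)"]) auto
    qed
  next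
    fix e1 e2 p
    assume "e1 \<in> shift2_arc a c -` M" "e2 \<in> shift2_arc a c -` M"
      and p: "p = fst e1 \<or> p = snd e1" "p = fst e2 \<or> p = snd e2"
    moreover have "shift2 a c p = fst (shift2_arc a c e1) \<or> shift2 a c p = snd (shift2_arc a c e1)"
      "shift2 a c p = fst (shift2_arc a c e2) \<or> shift2 a c p = snd (shift2_arc a c e2)"
      using p by (cases e1, cases e2, auto)+
    ultimately have "shift2_arc a c e1 = shift2_arc a c e2"
      using matching_arcs_eqI[OF M] by blast
    then show "e1 = e2"
      using inj_shift2_arc by (metis injD)
  qed
qed

lemma ex_undouble_run:
  assumes M: "is_matching (Suc n) M" and i: "i < length (run_head_list M)" and long: "2 \<le> run_lengths M ! i"
  shows "\<exists>M0. is_matching n M0 \<and> i < length (run_head_list M0) \<and> M = double_run M0 i"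
proof -
  obtain a b where ab: "run_head_list M ! i = (a, b)"
    by fastforce
  have inner: "(Suc a, b - 1) \<in> M"
    using run_mem[of 1 M a b] long run_lengths_nth[OF i ab] by simp
  define c where "c = b - 2"
  have "Suc a < b - 1"
    using matching_arcD[OF M inner] by simp
  then have ac: "a < c" and b: "b = c + 2" "b - 1 = Suc c"
    unfolding c_def by auto
  define M0 where "M0 = shift2_arc a c -` M"
  have inner': "(Suc a, Suc c) \<in> M"
    using inner b(2) by simp
  have M0: "is_matching n M0" "double_arc M0 a c = M"
    unfolding M0_def using matching_vimage_shift2[OF M inner'] double_arc_vimage[OF M inner'] by simp_all
  have "(shift2 a c a, shift2 a c c) \<in> M"
    using run_head_list_nth(2)[OF M i ab] ac b(1) by simp
  then have "(a, c) \<in> M0"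
    unfolding M0_def by simp
  then have heads: "run_head_list M = map (shift2_arc a c) (run_head_list M0)"
    using run_head_list_double_arc[OF M0(1)] M0(2) by blast
  then have i0: "i < length (run_head_list M0)"
    using i by simp
  have "shift2_arc a c (run_head_list M0 ! i) = shift2_arc a c (a, c)"
    using heads i0 ab ac b(1) by simp
  then have "run_head_list M0 ! i = (a, c)"
    using inj_shift2_arc by (metis injD)
  then show ?thesis
    using M0 i0 unfolding double_run_def by auto
qed

definition long_arcs :: "nat \<Rightarrow> (nat \<times> nat) set \<Rightarrow> (nat \<times> nat) set" where
  "long_arcs k M = {e \<in> M. k \<le> run_len M (fst e) (snd e)}"

lemma card_long_arcs_eq_sum:
  "finite M \<Longrightarrow> card (long_arcs k M) = (\<Sum>e\<in>M. if k \<le> run_len M (fst e) (snd e) then 1 else 0)"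
  unfolding long_arcs_def by (simp add: sum.inter_filter[symmetric])

lemma mem_long_arcs_iff:
  assumes "is_matching n M" and "1 \<le> k"
  shows "(x, y) \<in> long_arcs k M \<longleftrightarrow> (\<forall>q<k. (x + q, y - q) \<in> M)"
  using le_run_len_iff[OF assms(1), of k x y] spec[of _ 0] assms(2) unfolding long_arcs_def by auto

lemma card_long_arcs_double_run:
  assumes M: "is_matching n M" and i: "i < length (run_head_list M)"
  shows "card (long_arcs k (double_run M i))
    = card (long_arcs k M) + (if k \<le> Suc (run_lengths M ! i) then 1 else 0)"
proof -
  obtain a b where ab: "run_head_list M ! i = (a, b)"
    by fastforce
  note head = run_head_list_nth[OF M i ab]
  define M' where "M' = double_arc M a b"
  have M': "is_matching (Suc n) M'"
    unfolding M'_def by (rule matching_double_arc[OF M head(2)])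
  have fin: "finite M"
    by (rule finite_matching[OF M])
  define long where "long N e = (if k \<le> run_len N (fst e) (snd e) then 1 else (0::nat))" for N e
  have new: "(Suc a, Suc b) \<notin> shift2_arc a b ` M"
    using shift2_ne_Suc_fst by auto
  have M'_eq: "insert (Suc a, Suc b) (shift2_arc a b ` M) = M'"
    unfolding M'_def double_arc_def by auto
  have inj: "inj_on (shift2_arc a b) M"
    using inj_shift2_arc by (rule inj_on_subset) simp
  have "card (long_arcs k M') = (\<Sum>e\<in>M'. long M' e)"
    unfolding long_def by (rule card_long_arcs_eq_sum[OF finite_matching[OF M']])
  also have "\<dots> = long M' (Suc a, Suc b) + (\<Sum>e\<in>M. long M' (shift2_arc a b e))"
    using sum.insert[OF finite_imageI[OF fin] new, of "long M'"]
      sum.reindex[OF inj, of "long M'"]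
    by (simp add: M'_eq)
  also have "(\<Sum>e\<in>M. long M' (shift2_arc a b e))
      = long M' (a, b + 2) + (\<Sum>e\<in>M - {(a, b)}. long M e)"
  proof -
    have "long M' (shift2_arc a b e) = long M e" if "e \<in> M - {(a, b)}" for e
      using that run_len_double_arc_other[OF M head(1), of "fst e" "snd e"]
      unfolding long_def M'_def by (cases e) auto
    then have "(\<Sum>e\<in>M - {(a, b)}. long M' (shift2_arc a b e)) = (\<Sum>e\<in>M - {(a, b)}. long M e)"
      by (rule sum.cong[OF refl])
    then show ?thesis
      using sum.remove[OF fin head(2), of "\<lambda>e. long M' (shift2_arc a b e)"] head(3) by simp
  qed
  also have "long M' (a, b + 2) = (if k \<le> Suc (run_lengths M ! i) then 1 else 0)"
    using run_len_double_arc_new[OF M head(1)] run_lengths_nth[OF i ab]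
    unfolding long_def M'_def by simp
  also have "long M' (Suc a, Suc b) = long M (a, b)"
    using run_len_double_arc_new(1)[OF M head(1)] unfolding long_def M'_def by simp
  finally show ?thesis
    using sum.remove[OF fin head(2), of "long M"] card_long_arcs_eq_sum[OF fin]
    unfolding M'_def double_run_def ab long_def by simp
qed

lemma run_len_le_head:
  assumes M: "is_matching n M"
  shows "(x, y) \<in> M \<Longrightarrow> \<exists>h\<in>run_heads M. run_len M x y \<le> run_len M (fst h) (snd h)"
proof (induction x arbitrary: y rule: less_induct)
  case (less x)
  show ?case
  proof (cases "(x, y) \<in> run_heads M")
    case True
    then show ?thesis by force
  next
    case False
    then have pred: "(x - 1, Suc y) \<in> M"
      using less.prems unfolding run_heads_def by auto
    have "1 \<le> x"
      using matching_arcD[OF M less.prems] by simp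
    then have "run_len M (x - 1) (Suc y) = Suc (run_len M x y)"
      using run_len_Suc[OF M pred] by simp
    moreover obtain h where "h \<in> run_heads M" "run_len M (x - 1) (Suc y) \<le> run_len M (fst h) (snd h)"
      using less.IH[of "x - 1" "Suc y"] pred \<open>1 \<le> x\<close> by auto
    ultimately show ?thesis
      by (intro bexI[of _ h]) auto
  qed
qed

lemma single_arc_runs:
  assumes M: "is_matching n M" and short: "\<forall>l\<in>set (run_lengths M). l \<le> 1"
  shows "run_lengths M = replicate (card M) 1" and "long_arcs k M = (if k \<le> 1 then M else {})"
proof -
  have le1: "run_len M x y \<le> 1" if xy: "(x, y) \<in> M" for x y
  proof -
    obtain h where h: "h \<in> run_heads M" "run_len M x y \<le> run_len M (fst h) (snd h)"
      using run_len_le_head[OF M xy] by blast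
    then have "run_len M (fst h) (snd h) \<in> set (run_lengths M)"
      using set_run_head_list[OF M] unfolding run_lengths_def by force
    then show ?thesis
      using h(2) short by fastforce
  qed
  have eq1: "run_len M (fst e) (snd e) = 1" if "e \<in> M" for e
    using le1[of "fst e" "snd e"] run_len_pos[OF M, of "fst e" "snd e"] that by simp
  then show "long_arcs k M = (if k \<le> 1 then M else {})"
    unfolding long_arcs_def by auto
  have "run_heads M = M"
  proof (rule antisym[OF run_heads_subset], rule subsetI)
    fix e
    assume e: "e \<in> M"
    have "(fst e - 1, Suc (snd e)) \<notin> M"
    proof
      assume pred: "(fst e - 1, Suc (snd e)) \<in> M"
      have "1 \<le> fst e"
        using matching_arcD[OF M, of "fst e" "snd e"] e by simp
      then have "run_len M (fst e - 1) (Suc (snd e)) = Suc (run_len M (fst e) (snd e))"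
        using run_len_Suc[OF M pred] by simp
      then show False
        using le1[OF pred] run_len_pos[OF M, of "fst e" "snd e"] e by simp
    qed
    then show "e \<in> run_heads M"
      using e unfolding run_heads_def by simp
  qed
  then show "run_lengths M = replicate (card M) 1"
    using eq1 set_run_head_list[OF M] distinct_card[of "run_head_list M"]
    unfolding run_lengths_def run_head_list_def
    by (auto simp: map_replicate_const intro!: replicate_eqI)
qed

lemma card_long_arcs:
  assumes "is_matching n M" and "1 \<le> k"
  shows "card (long_arcs k M) = (\<Sum>l\<leftarrow>run_lengths M. l + 1 - k)"
  using assms(1)
proof (induction n arbitrary: M)
  case 0
  then have "M = {}"
    by (rule matching_0)
  then show ?case
    unfolding long_arcs_def run_lengths_def run_head_list_def run_heads_def by simp
next
  case (Suc n)
  show ?case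
  proof (cases "\<exists>i < length (run_head_list M). 2 \<le> run_lengths M ! i")
    case True
    then obtain i M0 where i: "i < length (run_head_list M)" and M0: "is_matching n M0"
      "i < length (run_head_list M0)" "M = double_run M0 i"
      using ex_undouble_run[OF Suc.prems] by blast
    define L where "L = run_lengths M0 ! i"
    define f where "f l = l + 1 - k" for l
    have "card (long_arcs k M) = (\<Sum>l\<leftarrow>run_lengths M0. f l) + (if k \<le> Suc L then 1 else 0)"
      using card_long_arcs_double_run[OF M0(1,2)] Suc.IH[OF M0(1)] M0(3) unfolding L_def f_def by simp
    moreover have "(\<Sum>l\<leftarrow>run_lengths M. f l) = (\<Sum>l\<leftarrow>run_lengths M0. f l) + f (Suc L) - f L"
      using run_lengths_double_run[OF M0(1,2)] M0 sum_list_update[of i "map f (run_lengths M0)"]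
      unfolding L_def by (simp add: map_update)
    moreover have "f L \<le> (\<Sum>l\<leftarrow>run_lengths M0. f l)"
      using elem_le_sum_list[of i "map f (run_lengths M0)"] M0(2) unfolding L_def by simp
    ultimately show ?thesis
      unfolding f_def using assms(2) by auto
  next
    case False
    then have short: "\<forall>l\<in>set (run_lengths M). l \<le> 1"
      by (fastforce simp: in_set_conv_nth)
    then show ?thesis
      using single_arc_runs[OF Suc.prems short] assms(2) by (simp add: sum_list_replicate)
  qed
qed

lemma sum_run_lengths:
  assumes M: "is_matching n M"
  shows "sum_list (run_lengths M) = n"
proof -
  have "long_arcs 1 M = M"
    using run_len_pos[OF M] unfolding long_arcs_def by fastforce
  then show ?thesis
    using card_long_arcs[OF M, of 1] card_matching[OF M] by simp
qed

lemma long_arc_bounds: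
  assumes M: "is_matching n M" and k: "1 \<le> k" and xy: "(x, y) \<in> long_arcs k M"
  shows "1 \<le> x" "k \<le> y"
proof -
  have ladder: "\<forall>q<k. (x + q, y - q) \<in> M"
    using xy mem_long_arcs_iff[OF M k] by blast
  have "(x, y) \<in> M" "(x + (k - 1), y - (k - 1)) \<in> M"
    using ladder[rule_format, of 0] ladder[rule_format, of "k - 1"] k by simp_all
  then have "1 \<le> x" "x + (k - 1) < y - (k - 1)"
    using matching_arcD[OF M] by blast+
  then show "1 \<le> x" "k \<le> y"
    by linarith+
qed

lemma card_ladders:
  assumes M: "is_matching n M" and k: "1 \<le> k"
  shows "card {(i, j). \<forall>q<k. (i + Suc q, j + k - q) \<in> M} = card (long_arcs k M)"
proof -
  define P where "P = {(i, j). \<forall>q<k. (i + Suc q, j + k - q) \<in> M}"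
  define h where "h = (\<lambda>(i, j). (Suc i, j + k))"
  have "inj h"
    unfolding h_def by (auto intro!: injI)
  moreover have "h ` P = long_arcs k M"
  proof (intro equalityI subsetI)
    fix e
    assume "e \<in> h ` P"
    then obtain i j where e: "e = h (i, j)" and "(i, j) \<in> P"
      by auto
    then have "\<forall>q<k. (Suc i + q, j + k - q) \<in> M"
      unfolding P_def by simp
    then show "e \<in> long_arcs k M"
      unfolding e h_def using mem_long_arcs_iff[OF M k] by simp
  next
    fix e
    assume "e \<in> long_arcs k M"
    then obtain x y where e: "e = (x, y)" and ladder: "\<forall>q<k. (x + q, y - q) \<in> M"
      and x: "1 \<le> x" and y: "k \<le> y"
      using mem_long_arcs_iff[OF M k] long_arc_bounds[OF M k] by (cases e) auto
    have "e = h (x - 1, y - k)"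
      using e x y unfolding h_def by simp
    moreover have "(x - 1, y - k) \<in> P"
      unfolding P_def mem_Collect_eq case_prod_conv
    proof (intro allI impI)
      fix q
      assume "q < k"
      moreover have "x - 1 + Suc q = x + q" "y - k + k - q = y - q"
        using x y by simp_all
      ultimately show "(x - 1 + Suc q, y - k + k - q) \<in> M"
        using ladder by simp
    qed
    ultimately show "e \<in> h ` P"
      by (rule image_eqI)
  qed
  ultimately have "card P = card (long_arcs k M)"
    by (metis card_image inj_on_subset subset_UNIV)
  then show ?thesis
    unfolding P_def .
qed

lemma occ21_eq_sum_run_lengths:
  assumes "is_matching n M"
  shows "occ21 M = (\<Sum>l\<leftarrow>run_lengths M. l - 1)"
proof -
  have "{(i, j). (i + 1, j + 2) \<in> M \<and> (i + 2, j + 1) \<in> M} = {(i, j). \<forall>q<2. (i + Suc q, j + 2 - q) \<in> M}"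
    by (auto simp: numeral_2_eq_2 less_Suc_eq)
  then show ?thesis
    unfolding occ21_def using card_ladders[OF assms, of 2] card_long_arcs[OF assms, of 2] by simp
qed

lemma occ321_eq_sum_run_lengths:
  assumes "is_matching n M"
  shows "occ321 M = (\<Sum>l\<leftarrow>run_lengths M. l - 2)"
proof -
  have "{(i, j). (i + 1, j + 3) \<in> M \<and> (i + 2, j + 2) \<in> M \<and> (i + 3, j + 1) \<in> M}
      = {(i, j). \<forall>q<3. (i + Suc q, j + 3 - q) \<in> M}"
    by (auto simp: numeral_3_eq_3 numeral_2_eq_2 less_Suc_eq)
  then show ?thesis
    unfolding occ321_def using card_ladders[OF assms, of 3] card_long_arcs[OF assms, of 3] by simp
qed

lemma sum_list_eq_length: "\<forall>x\<in>set xs. x = (1::nat) \<Longrightarrow> sum_list xs = length xs"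
  by (induction xs) auto

lemma run_lengths_eq_replicate_1_iff:
  assumes M: "is_matching n M"
  shows "run_lengths M = replicate m 1 \<longleftrightarrow> m = n \<and> occ21 M = 0"
proof -
  have "occ21 M = 0 \<longleftrightarrow> (\<forall>l\<in>set (run_lengths M). l - 1 = 0)"
    using occ21_eq_sum_run_lengths[OF M] by simp
  also have "\<dots> \<longleftrightarrow> (\<forall>l\<in>set (run_lengths M). l = 1)"
    by (intro ball_cong refl) (auto dest: run_lengths_pos[OF M])
  finally have "occ21 M = 0 \<longleftrightarrow> (\<forall>l\<in>set (run_lengths M). l = 1)" .
  moreover have "run_lengths M = replicate m 1
      \<longleftrightarrow> length (run_lengths M) = m \<and> (\<forall>l\<in>set (run_lengths M). l = 1)"
    by (metis in_set_replicate length_replicate replicate_length_same)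
  moreover have "(\<forall>l\<in>set (run_lengths M). l = 1) \<Longrightarrow> length (run_lengths M) = n"
    using sum_run_lengths[OF M] sum_list_eq_length by metis
  ultimately show ?thesis
    by auto
qed

lemma card_matchings_with_unit_runs: "card {M \<in> matchings n. run_lengths M = replicate n 1} = a_num n 0"
proof -
  have "{M \<in> matchings n. run_lengths M = replicate n 1} = {M \<in> matchings n. occ21 M = 0}"
    using run_lengths_eq_replicate_1_iff unfolding matchings_def by blast
  then show ?thesis
    unfolding a_num_def by simp
qed

lemma bij_betw_double_run:
  assumes i: "i < length t" "2 \<le> t ! i"
  shows "bij_betw (\<lambda>M. double_run M i)
    {M \<in> matchings n. run_lengths M = t[i := t ! i - 1]} {M \<in> matchings (Suc n). run_lengths M = t}"
proof (rule bij_betw_imageI)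
  show "inj_on (\<lambda>M. double_run M i) {M \<in> matchings n. run_lengths M = t[i := t ! i - 1]}"
  proof (rule inj_on_subset[OF inj_on_double_run], rule subsetI)
    fix M
    assume "M \<in> {M \<in> matchings n. run_lengths M = t[i := t ! i - 1]}"
    then have "is_matching n M" "run_lengths M = t[i := t ! i - 1]"
      unfolding matchings_def by auto
    moreover from this(2) have "length (run_head_list M) = length t"
      by (metis length_list_update length_run_lengths)
    ultimately show "M \<in> {M. is_matching n M \<and> i < length (run_head_list M)}"
      using i by simp
  qed
  show "(\<lambda>M. double_run M i) ` {M \<in> matchings n. run_lengths M = t[i := t ! i - 1]}
      = {M \<in> matchings (Suc n). run_lengths M = t}"
  proof (intro equalityI subsetI)
    fix M'
    assume "M' \<in> (\<lambda>M. double_run M i) ` {M \<in> matchings n. run_lengths M = t[i := t ! i - 1]}"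
    then obtain M where M: "is_matching n M" "run_lengths M = t[i := t ! i - 1]" "M' = double_run M i"
      unfolding matchings_def by blast
    then have "i < length (run_head_list M)"
      using i by (metis length_list_update length_run_lengths)
    then show "M' \<in> {M \<in> matchings (Suc n). run_lengths M = t}"
      using matching_double_run[OF M(1)] run_lengths_double_run[OF M(1)] M(2,3) i
      unfolding matchings_def by simp
  next
    fix M
    assume "M \<in> {M \<in> matchings (Suc n). run_lengths M = t}"
    then have M: "is_matching (Suc n) M" "run_lengths M = t"
      unfolding matchings_def by auto
    then obtain M0 where M0: "is_matching n M0" "i < length (run_head_list M0)" "M = double_run M0 i"
      using ex_undouble_run[OF M(1), of i] i by auto
    have "t = (run_lengths M0)[i := Suc (run_lengths M0 ! i)]"
      using run_lengths_double_run[OF M0(1,2)] M0(3) M(2) by simp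
    then have "run_lengths M0 = t[i := t ! i - 1]"
      using M0(2) by simp
    then show "M \<in> (\<lambda>M. double_run M i) ` {M \<in> matchings n. run_lengths M = t[i := t ! i - 1]}"
      using M0 unfolding matchings_def by blast
  qed
qed

lemma card_matchings_with_run_lengths_sum:
  "0 \<notin> set t \<Longrightarrow> card {M \<in> matchings (sum_list t). run_lengths M = t} = a_num (length t) 0"
proof (induction "sum_list t" arbitrary: t rule: less_induct)
  case less
  show ?case
  proof (cases "\<exists>i<length t. 2 \<le> t ! i")
    case True
    then obtain i where i: "i < length t" "2 \<le> t ! i"
      by blast
    define t' where "t' = t[i := t ! i - 1]"
    have sum: "sum_list t = Suc (sum_list t')"
      using sum_list_update[OF i(1), of "t ! i - 1"] elem_le_sum_list[OF i(1)] i(2)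
      unfolding t'_def by simp
    have "0 \<notin> set t'"
      using less.prems i set_update_subset_insert unfolding t'_def by fastforce
    then have "card {M \<in> matchings (sum_list t'). run_lengths M = t'} = a_num (length t') 0"
      using less.hyps[of t'] sum by simp
    then show ?thesis
      using bij_betw_same_card[OF bij_betw_double_run[OF i, of "sum_list t'"]] sum
      unfolding t'_def by simp
  next
    case False
    have ones: "\<forall>l\<in>set t. l = 1"
    proof
      fix l
      assume l: "l \<in> set t"
      then have "\<not> 2 \<le> l"
        using False by (auto simp: in_set_conv_nth)
      moreover have "l \<noteq> 0"
        using less.prems l by (metis gr0I)
      ultimately show "l = 1"
        by arith
    qed
    then have "t = replicate (length t) 1"
      by (simp add: replicate_length_same)
    moreover have "sum_list t = length t"
      using ones by (rule sum_list_eq_length)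
    ultimately show ?thesis
      using card_matchings_with_unit_runs[of "length t"] by simp
  qed
qed

lemma card_matchings_with_run_lengths:
  assumes "0 \<notin> set t"
  shows "card {M \<in> matchings n. run_lengths M = t} = (if sum_list t = n then a_num (length t) 0 else 0)"
proof (cases "sum_list t = n")
  case True
  then show ?thesis
    using card_matchings_with_run_lengths_sum[OF assms] by simp
next
  case False
  then have "{M \<in> matchings n. run_lengths M = t} = {}"
    using sum_run_lengths unfolding matchings_def by auto
  with False show ?thesis
    by (metis card.empty)
qed

definition run_profiles :: "nat \<Rightarrow> nat \<Rightarrow> nat list set" where
  "run_profiles n k = {t. 0 \<notin> set t \<and> sum_list t = n \<and> (\<Sum>l\<leftarrow>t. l - 2) = k}"

lemma finite_run_profiles: "finite (run_profiles n k)"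
proof (rule finite_subset[OF _ finite_lists_length_le[of "{0..n}" n]])
  show "run_profiles n k \<subseteq> {t. set t \<subseteq> {0..n} \<and> length t \<le> n}"
  proof
    fix t
    assume "t \<in> run_profiles n k"
    then have t: "0 \<notin> set t" "sum_list t = n"
      unfolding run_profiles_def by auto
    have "length t \<le> sum_list t"
      using t(1)
    proof (induction t)
      case (Cons l t)
      then show ?case by (cases l) auto
    qed simp
    moreover have "set t \<subseteq> {0..n}"
      using member_le_sum_list t(2) by fastforce
    ultimately show "t \<in> {t. set t \<subseteq> {0..n} \<and> length t \<le> n}"
      using t by simp
  qed
qed simp

lemma c_num_eq_sum_run_profiles: "c_num n k = (\<Sum>t\<in>run_profiles n k. a_num (length t) 0)"
proof -
  have "{M \<in> matchings n. occ321 M = k} = (\<Union>t\<in>run_profiles n k. {M \<in> matchings n. run_lengths M = t})"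
  proof (intro equalityI subsetI)
    fix M
    assume "M \<in> {M \<in> matchings n. occ321 M = k}"
    then have M: "is_matching n M" "occ321 M = k"
      unfolding matchings_def by auto
    moreover have "0 \<notin> set (run_lengths M)"
      using run_lengths_pos[OF M(1)] by blast
    ultimately have "run_lengths M \<in> run_profiles n k"
      using occ321_eq_sum_run_lengths[OF M(1)] sum_run_lengths[OF M(1)] unfolding run_profiles_def by simp
    then show "M \<in> (\<Union>t\<in>run_profiles n k. {M \<in> matchings n. run_lengths M = t})"
      using M(1) unfolding matchings_def by blast
  next
    fix M
    assume "M \<in> (\<Union>t\<in>run_profiles n k. {M \<in> matchings n. run_lengths M = t})"
    then obtain t where "t \<in> run_profiles n k" "is_matching n M" "run_lengths M = t"
      unfolding matchings_def by blast
    then show "M \<in> {M \<in> matchings n. occ321 M = k}"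
      using occ321_eq_sum_run_lengths unfolding run_profiles_def matchings_def by simp
  qed
  then have "c_num n k = card (\<Union>t\<in>run_profiles n k. {M \<in> matchings n. run_lengths M = t})"
    unfolding c_num_def by simp
  also have "\<dots> = (\<Sum>t\<in>run_profiles n k. card {M \<in> matchings n. run_lengths M = t})"
    by (rule card_UN_disjoint[OF finite_run_profiles]) (auto simp: finite_matchings)
  also have "\<dots> = (\<Sum>t\<in>run_profiles n k. a_num (length t) 0)"
    by (rule sum.cong) (auto simp: run_profiles_def card_matchings_with_run_lengths)
  finally show ?thesis .
qed

lemma card_bool_lists_count_True:
  "card {p :: bool list. length p = m \<and> length (filter id p) = s} = m choose s"
proof -
  have "bij_betw (\<lambda>p. {i. i < m \<and> p ! i})
      {p :: bool list. length p = m \<and> length (filter id p) = s} {S. S \<subseteq> {..<m} \<and> card S = s}"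
  proof (rule bij_betw_byWitness[where f' = "\<lambda>S. map (\<lambda>i. i \<in> S) [0..<m]"])
    show "\<forall>p\<in>{p. length p = m \<and> length (filter id p) = s}. map (\<lambda>i. i \<in> {i. i < m \<and> p ! i}) [0..<m] = p"
      by (auto intro: nth_equalityI)
    show "\<forall>S\<in>{S. S \<subseteq> {..<m} \<and> card S = s}. {i. i < m \<and> map (\<lambda>i. i \<in> S) [0..<m] ! i} = S"
      by auto
    show "(\<lambda>p. {i. i < m \<and> p ! i}) ` {p. length p = m \<and> length (filter id p) = s}
        \<subseteq> {S. S \<subseteq> {..<m} \<and> card S = s}"
      by (auto simp: length_filter_conv_card)
    show "(\<lambda>S. map (\<lambda>i. i \<in> S) [0..<m]) ` {S. S \<subseteq> {..<m} \<and> card S = s}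
        \<subseteq> {p. length p = m \<and> length (filter id p) = s}"
      by (auto simp: length_filter_conv_card Int_absorb1 Collect_conj_eq[symmetric] intro!: arg_cong[where f = card])
  qed
  then show ?thesis
    using n_subsets[of "{..<m}" s] by (simp add: bij_betw_same_card)
qed

fun runs_of_marks :: "bool list \<Rightarrow> nat list \<Rightarrow> nat list" where
  "runs_of_marks [] e = []"
| "runs_of_marks (False # p) e = 1 # runs_of_marks p e"
| "runs_of_marks (True # p) (x # e) = (x + 2) # runs_of_marks p e"
| "runs_of_marks (True # p) [] = []"

definition long_marks :: "nat list \<Rightarrow> bool list" where
  "long_marks t = map (\<lambda>l. 2 \<le> l) t"

definition excesses :: "nat list \<Rightarrow> nat list" where
  "excesses t = map (\<lambda>l. l - 2) (filter (\<lambda>l. 2 \<le> l) t)"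

lemma runs_of_marks:
  assumes "length e = length (filter id p)"
  shows "length (runs_of_marks p e) = length p" "long_marks (runs_of_marks p e) = p" "excesses (runs_of_marks p e) = e"
    "0 \<notin> set (runs_of_marks p e)"
    "sum_list (runs_of_marks p e) = length p + length (filter id p) + sum_list e"
    "(\<Sum>l\<leftarrow>runs_of_marks p e. l - 2) = sum_list e"
  using assms by (induction p e rule: runs_of_marks.induct) (auto simp: long_marks_def excesses_def)

lemma runs_of_marks_inverse:
  "0 \<notin> set t \<Longrightarrow> runs_of_marks (long_marks t) (excesses t) = t"
  by (induction t) (auto simp: long_marks_def excesses_def)

lemma length_excesses: "length (excesses t) = length (filter id (long_marks t))"
  unfolding excesses_def long_marks_def by (simp add: comp_def)

lemma bij_betw_runs_of_marks:
  "bij_betw (\<lambda>(p, e). runs_of_marks p e)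
    (SIGMA p:{p. length p + length (filter id p) + k = n}. {e. length e = length (filter id p) \<and> sum_list e = k})
    (run_profiles n k)"
proof (rule bij_betw_byWitness[where f' = "\<lambda>t. (long_marks t, excesses t)"])
  show "\<forall>t\<in>run_profiles n k. (\<lambda>(p, e). runs_of_marks p e) (long_marks t, excesses t) = t"
    by (simp add: run_profiles_def runs_of_marks_inverse)
  show "(\<lambda>t. (long_marks t, excesses t)) ` run_profiles n k \<subseteq>
      (SIGMA p:{p. length p + length (filter id p) + k = n}. {e. length e = length (filter id p) \<and> sum_list e = k})"
  proof (rule image_subsetI)
    fix t
    assume t: "t \<in> run_profiles n k"
    then have "runs_of_marks (long_marks t) (excesses t) = t"
      unfolding run_profiles_def by (simp add: runs_of_marks_inverse)
    then show "(long_marks t, excesses t) \<in>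
      (SIGMA p:{p. length p + length (filter id p) + k = n}. {e. length e = length (filter id p) \<and> sum_list e = k})"
      using runs_of_marks(5,6)[OF length_excesses, of t] t length_excesses[of t]
      unfolding run_profiles_def by simp
  qed
qed (auto simp: run_profiles_def runs_of_marks)

lemma sum_run_profiles_marks:
  fixes \<phi> :: "nat \<Rightarrow> nat"
  shows "(\<Sum>t\<in>run_profiles n k. \<phi> (length t))
    = (\<Sum>p | length p + length (filter id p) + k = n. ((k + length (filter id p) - 1) choose k) * \<phi> (length p))"
proof -
  define P where "P = {p. length p + length (filter id p) + k = n}"
  define E where "E p = {e. length e = length (filter id p) \<and> sum_list e = k}" for p
  have finP: "finite P"
    by (rule finite_subset[OF _ finite_lists_length_le[of UNIV n]]) (auto simp: P_def)
  have finE: "finite (E p)" for p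
    by (rule finite_subset[OF _ finite_lists_length_le[of "{0..k}" "length (filter id p)"]])
      (auto simp: E_def dest: member_le_sum_list)
  have "(\<Sum>t\<in>run_profiles n k. \<phi> (length t)) = (\<Sum>(p, e)\<in>Sigma P E. \<phi> (length (runs_of_marks p e)))"
    using sum.reindex_bij_betw[OF bij_betw_runs_of_marks, of "\<lambda>t. \<phi> (length t)" k n]
    unfolding P_def E_def by (simp add: case_prod_beta')
  also have "\<dots> = (\<Sum>(p, e)\<in>Sigma P E. \<phi> (length p))"
    by (rule sum.cong) (auto simp: E_def runs_of_marks)
  also have "\<dots> = (\<Sum>p\<in>P. card (E p) * \<phi> (length p))"
    using sum.Sigma[OF finP, of E "\<lambda>p e. \<phi> (length p)"] finE by simp
  also have "\<dots> = (\<Sum>p\<in>P. ((k + length (filter id p) - 1) choose k) * \<phi> (length p))"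
    unfolding E_def by (simp add: card_length_sum_list)
  finally show ?thesis
    unfolding P_def .
qed

lemma sum_run_profiles:
  fixes \<phi> :: "nat \<Rightarrow> nat"
  shows "(\<Sum>t\<in>run_profiles n k. \<phi> (length t))
    = (\<Sum>s=0..n. ((k + s - 1) choose k) * ((n - k - s) choose s) * \<phi> (n - k - s))"
proof -
  define count where "count p = length (filter id p)" for p :: "bool list"
  define P where "P = {p. length p + count p + k = n}"
  have finP: "finite P"
    by (rule finite_subset[OF _ finite_lists_length_le[of UNIV n]]) (auto simp: P_def)
  have "(\<Sum>t\<in>run_profiles n k. \<phi> (length t)) = (\<Sum>p\<in>P. ((k + count p - 1) choose k) * \<phi> (length p))"
    unfolding P_def count_def by (rule sum_run_profiles_marks)
  also have "\<dots> = (\<Sum>s=0..n. \<Sum>p\<in>{p \<in> P. count p = s}. ((k + count p - 1) choose k) * \<phi> (length p))"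
    by (rule sum.group[symmetric, OF finP]) (auto simp: P_def count_def)
  also have "\<dots> = (\<Sum>s=0..n. ((k + s - 1) choose k) * ((n - k - s) choose s) * \<phi> (n - k - s))"
  proof (rule sum.cong[OF refl])
    fix s
    have "(\<Sum>p\<in>{p \<in> P. count p = s}. ((k + count p - 1) choose k) * \<phi> (length p))
        = (\<Sum>p\<in>{p \<in> P. count p = s}. ((k + s - 1) choose k) * \<phi> (n - k - s))"
      by (rule sum.cong) (auto simp: P_def)
    also have "\<dots> = card {p \<in> P. count p = s} * (((k + s - 1) choose k) * \<phi> (n - k - s))"
      by simp
    also have "\<dots> = ((k + s - 1) choose k) * ((n - k - s) choose s) * \<phi> (n - k - s)"
    proof (cases "s + k \<le> n")
      case True
      then have "{p \<in> P. count p = s} = {p. length p = n - k - s \<and> length (filter id p) = s}"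
        unfolding P_def count_def by auto
      then show ?thesis
        using card_bool_lists_count_True[of "n - k - s" s] by simp
    next
      case False
      then have "{p \<in> P. count p = s} = {}"
        unfolding P_def by auto
      then have "card {p \<in> P. count p = s} = 0"
        by (metis card.empty)
      moreover have "((k + s - 1) choose k) * ((n - k - s) choose s) = 0"
        using False by (cases s) auto
      ultimately show ?thesis
        by simp
    qed
    finally show "(\<Sum>p\<in>{p \<in> P. count p = s}. ((k + count p - 1) choose k) * \<phi> (length p))
        = ((k + s - 1) choose k) * ((n - k - s) choose s) * \<phi> (n - k - s)" .
  qed
  finally show ?thesis .
qed

lemma c_num_eq_sum:
  "c_num n k = (\<Sum>s=0..n. ((k + s - 1) choose k) * ((n - k - s) choose s) * a_num (n - k - s) 0)"
  using c_num_eq_sum_run_profiles[of n k] sum_run_profiles[of "\<lambda>m. a_num m 0" n k] by simp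

theorem theorem3:
  fixes n :: nat
  assumes "n > 0"
  shows "c_num n 0 = (\<Sum>s=0..n div 2. ((n - s) choose s) * a_num (n - s) 0)
         \<and> (\<forall>k::nat. k > 0 \<longrightarrow>
           c_num n k = (\<Sum>s=1..(n - k) div 2.
              ((k + s - 1) choose k) * ((n - k - s) choose s) * a_num (n - k - s) 0))"
proof (intro conjI allI impI)
  have "c_num n 0 = (\<Sum>s=0..n. ((n - s) choose s) * a_num (n - s) 0)"
    using c_num_eq_sum[of n 0] by simp
  also have "\<dots> = (\<Sum>s=0..n div 2. ((n - s) choose s) * a_num (n - s) 0)"
    by (rule sum.mono_neutral_right) auto
  finally show "c_num n 0 = (\<Sum>s=0..n div 2. ((n - s) choose s) * a_num (n - s) 0)" .
next
  fix k :: nat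
  assume "k > 0"
  have "c_num n k = (\<Sum>s=0..n. ((k + s - 1) choose k) * ((n - k - s) choose s) * a_num (n - k - s) 0)"
    by (rule c_num_eq_sum)
  also have "\<dots> = (\<Sum>s=1..(n - k) div 2. ((k + s - 1) choose k) * ((n - k - s) choose s) * a_num (n - k - s) 0)"
    by (rule sum.mono_neutral_right) (use \<open>k > 0\<close> in auto)
  finally show "c_num n k = (\<Sum>s=1..(n - k) div 2.
      ((k + s - 1) choose k) * ((n - k - s) choose s) * a_num (n - k - s) 0)" .
qed

end
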